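(* For every integer $n\ge 24$, $5^n$ is selfcondensable.
   Context: For a finite nonempty multiset $S$ of real numbers, $V(S)$ is the smallest set of real numbers such that: (1) if $|S|=1$ then $S\subseteq V(S)$; (2) if $|S|\ge 2$, then for all nonempty multisets $A,B$ with $A+B=S$ (multiplicities add) and all $a\in V(A)$, $b\in V(B)$, each of $a+b,\ a-b,\ b-a,\ ab,\ a/b,\ b/a,\ a^b,\ b^a$ lies in $V(S)$ whenever it is a well-defined real number; (3) if $a\in V(S)$ is a nonnegative integer then $a!\in V(S)$ (with $0!=1$). A positive integer $N$ is selfcondensable if $N\in V(S_N)$, where $S_N$ is the multiset of the digits of the decimal representation of $N$ (each digit counted with its multiplicity). *)

theory Defs
  imports Complex_Main "HOL-Library.Multiset"
begin

definition pow_val :: "real \<Rightarrow> real \<Rightarrow> real \<Rightarrow> bool" where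
  "pow_val a b c \<longleftrightarrow>
     (a > 0 \<and> c = a powr b) \<or>
     (a = 0 \<and> b > 0 \<and> c = 0) \<or>
     (a \<noteq> 0 \<and> b \<in> \<int> \<and> c = a powi \<lfloor>b\<rfloor>)"

definition op_val :: "real \<Rightarrow> real \<Rightarrow> real \<Rightarrow> bool" where
  "op_val a b c \<longleftrightarrow>
     c = a + b \<or> c = a - b \<or> c = b - a \<or> c = a * b \<or>
     (b \<noteq> 0 \<and> c = a / b) \<or> (a \<noteq> 0 \<and> c = b / a) \<or>
     pow_val a b c \<or> pow_val b a c"

inductive inV :: "real multiset \<Rightarrow> real \<Rightarrow> bool" where
  single: "inV {#x#} x"
| combine: "A \<noteq> {#} \<Longrightarrow> B \<noteq> {#} \<Longrightarrow> inV A a \<Longrightarrow> inV B b \<Longrightarrow> op_val a b c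
            \<Longrightarrow> inV (A + B) c"
| factorial: "inV S a \<Longrightarrow> a \<in> \<nat> \<Longrightarrow> inV S (fact (nat \<lfloor>a\<rfloor>))"

fun digits :: "nat \<Rightarrow> nat list" where
  "digits n = (if n < 10 then [n] else n mod 10 # digits (n div 10))"

definition digit_mset :: "nat \<Rightarrow> real multiset" where
  "digit_mset N = image_mset real (mset (digits N))"

definition selfcondensable :: "nat \<Rightarrow> bool" where
  "selfcondensable N \<longleftrightarrow> N > 0 \<and> inV (digit_mset N) (real N)"

end

theory Submission
  imports Defs
begin

text \<open>A pair of equal digits evaluates to 1, and from such ones any v can be built by the binary
  method, doubling by multiplying with 1 + 1; about 3 log2 v pairs suffice. Leftover digits
  are absorbed into a 1 as exponents, and 5^n is the final digit 5 raised to n. By pigeonhole the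
  other digits of 5^n contain enough pairs once n \<ge> 56. For 24 \<le> n < 56, n is written
  directly as an arithmetic expression in two or three digits of 5^n, and a spare 0 or 1
  absorbs the rest.\<close>

lemma inV_nonempty: "inV A a \<Longrightarrow> A \<noteq> {#}"
  by (induction rule: inV.induct) auto

lemma inV_add: "inV A a \<Longrightarrow> inV B b \<Longrightarrow> inV (A + B) (a + b)"
  by (rule inV.combine) (auto simp: inV_nonempty op_val_def)

lemma inV_diff: "inV A a \<Longrightarrow> inV B b \<Longrightarrow> inV (A + B) (a - b)"
  by (rule inV.combine) (auto simp: inV_nonempty op_val_def)

lemma inV_mult: "inV A a \<Longrightarrow> inV B b \<Longrightarrow> inV (A + B) (a * b)"
  by (rule inV.combine) (auto simp: inV_nonempty op_val_def)

lemma inV_power: "inV A a \<Longrightarrow> inV B (real k) \<Longrightarrow> 0 < a \<Longrightarrow> inV (A + B) (a ^ k)"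
  by (rule inV.combine) (auto simp: inV_nonempty op_val_def pow_val_def powr_realpow)

lemma inV_fact: "inV A (real k) \<Longrightarrow> inV A (fact k)"
  using inV.factorial[of A "real k"] by simp

lemma inV_fact_digit: "inV {#real k#} (fact k)"
  by (rule inV_fact[OF inV.single])

lemma inV_zero_or_one: "u \<in> {0, 1} \<Longrightarrow> inV {#u#} 1"
  using inV_fact_digit[of 0] inV.single[of 1] by auto

text \<open>A pair of equal digits yields 1, as d/d or, for d = 0, as (0 + 0)!.\<close>
lemma inV_pair_one: "inV {#d, d#} 1"
proof (cases "d = 0")
  case True
  then show ?thesis
    using inV_fact[of "{#0, 0#}" 0] inV_add[OF inV.single[of 0] inV.single[of 0]] by simp
next
  case False
  have "inV ({#d#} + {#d#}) 1"
    by (rule inV.combine) (use False in \<open>auto simp: op_val_def intro: inV.single\<close>)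
  then show ?thesis by simp
qed

text \<open>Any further digits are swallowed by raising 1 to their power.\<close>
lemma inV_one_extend: "inV A 1 \<Longrightarrow> inV (A + B) 1"
proof (induction B)
  case (add x B)
  have "inV ((A + B) + {#x#}) 1"
    by (rule inV.combine[OF inV_nonempty[OF add.IH[OF add.prems]] _ add.IH[OF add.prems] inV.single])
       (auto simp: op_val_def pow_val_def)
  then show ?case by simp
qed simp

lemma inV_times_one: "inV A a \<Longrightarrow> inV B 1 \<Longrightarrow> inV (A + B) a"
  using inV_mult[of A a B 1] by simp

definition pairs :: "real list \<Rightarrow> real multiset" where
  "pairs ds = (\<Sum>d\<leftarrow>ds. {#d, d#})"

lemma pairs_Nil [simp]: "pairs [] = {#}"
  and pairs_Cons [simp]: "pairs (d # ds) = {#d, d#} + pairs ds"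
  and pairs_append [simp]: "pairs (ds @ es) = pairs ds + pairs es"
  by (simp_all add: pairs_def)

text \<open>One step of the binary method: two pairs give 1 + 1 to double with, a third pair gives
  the 1 to add for an odd number.\<close>
lemma inV_binary_step:
  assumes "inV A (real (v div 2))" and "length ps = (if even v then 2 else 3)"
  shows "inV (A + pairs ps) (real v)"
proof -
  obtain a b qs where ps: "ps = a # b # qs" and qs: "length qs = (if even v then 0 else 1)"
    using assms(2) by (cases ps rule: remdups_adj.cases) (auto split: if_splits)
  have double: "inV (pairs [a, b] + A) (2 * real (v div 2))"
    using inV_mult[OF inV_add[OF inV_pair_one inV_pair_one] assms(1)] by simp
  show ?thesis
  proof (cases "even v")
    case True
    then have "real v = 2 * real (v div 2)" by (auto elim!: evenE)
    then show ?thesis using double ps qs True by simp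
  next
    case False
    then obtain c where "qs = [c]" using qs by (cases qs) auto
    moreover have "real v = 2 * real (v div 2) + 1" using False by (auto elim!: oddE)
    ultimately show ?thesis using inV_add[OF double inV_pair_one[of c]] ps by (simp add: add.assoc)
  qed
qed

fun pair_cost :: "nat \<Rightarrow> nat" where
  "pair_cost v = (if v \<le> 1 then 1 else pair_cost (v div 2) + (if even v then 2 else 3))"

declare pair_cost.simps [simp del]

lemma inV_pairs:
  assumes "1 \<le> v" and "pair_cost v \<le> length ds"
  shows "inV (pairs ds + T) (real v)"
  using assms
proof (induction v arbitrary: ds rule: less_induct)
  case (less v)
  show ?case
  proof (cases "v = 1")
    case True
    then obtain d ds' where "ds = d # ds'"
      using less.prems(2) by (cases ds) (auto simp: pair_cost.simps)
    then show ?thesis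
      using inV_one_extend[OF inV_pair_one, of d "pairs ds' + T"] True by (simp add: add.assoc)
  next
    case False
    define m where "m = (if even v then 2 else 3 :: nat)"
    have cost: "pair_cost v = pair_cost (v div 2) + m"
      using False less.prems(1) by (simp add: pair_cost.simps[of v] m_def)
    then have "inV (pairs (drop m ds) + T) (real (v div 2))"
      using less.IH[of "v div 2" "drop m ds"] False less.prems by simp
    moreover have "length (take m ds) = (if even v then 2 else 3)"
      using cost less.prems(2) by (simp add: m_def)
    ultimately have "inV (pairs (drop m ds) + T + pairs (take m ds)) (real v)"
      by (rule inV_binary_step)
    then show ?thesis by (metis add.commute add.left_commute append_take_drop_id pairs_append)
  qed
qed

lemma pairs_decomposition:
  assumes "finite S" and "set_mset R \<subseteq> S"
  shows "\<exists>ds T. R = pairs ds + T \<and> size R \<le> 2 * length ds + card S"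
  using assms(2)
proof (induction "size R" arbitrary: R rule: less_induct)
  case less
  show ?case
  proof (cases "size R \<le> card S")
    case True
    then show ?thesis by (intro exI[of _ "[]"] exI[of _ R]) simp
  next
    case False
    then have "size (mset_set S) < size R" by simp
    then obtain x where x: "count (mset_set S) x < count R x"
      using size_lt_imp_ex_count_lt by blast
    then have "x \<in> S" using less.prems by (metis count_inI gr_implies_not0 subsetD)
    then have "count R x \<ge> 2" using x assms(1) by simp
    define R' where "R' = R - {#x, x#}"
    have R: "R = {#x, x#} + R'"
      unfolding R'_def using \<open>count R x \<ge> 2\<close> by (auto simp: multiset_eq_iff)
    then obtain ds T where "R' = pairs ds + T" "size R' \<le> 2 * length ds + card S"
      using less.hyps[of R'] less.prems by auto
    then show ?thesis
      by (intro exI[of _ "x # ds"] exI[of _ T]) (simp add: R add.assoc)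
  qed
qed

declare digits.simps [simp del]

lemma digits_less_ten_eq [simp]: "r < 10 \<Longrightarrow> digits r = [r]"
  by (simp add: digits.simps)

lemma digits_ten_mult_add: "0 < q \<Longrightarrow> r < 10 \<Longrightarrow> digits (10 * q + r) = r # digits q"
  by (subst digits.simps) simp

lemma mset_digits_mod_power_ten:
  assumes "0 < k" and "10 ^ k \<le> N"
  shows "mset (digits (N mod 10 ^ k)) \<subseteq># mset (digits N)"
  using assms
proof (induction k arbitrary: N)
  case (Suc j)
  have quotient: "10 ^ j \<le> N div 10"
    using Suc.prems(2) by (simp add: less_eq_div_iff_mult_less_eq)
  then have "0 < N div 10" using zero_less_power[of "10::nat" j] by linarith
  then have digits_N: "digits N = N mod 10 # digits (N div 10)"
    using digits_ten_mult_add[of "N div 10" "N mod 10"] by simp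
  define q where "q = N div 10 mod 10 ^ j"
  have low: "N mod 10 ^ Suc j = 10 * q + N mod 10"
    by (simp add: q_def mod_mult2_eq)
  show ?case
  proof (cases "q = 0")
    case True
    then show ?thesis unfolding low digits_N by simp
  next
    case False
    then have "0 < j" by (cases j) (simp_all add: q_def)
    from this quotient have "mset (digits q) \<subseteq># mset (digits (N div 10))"
      unfolding q_def by (rule Suc.IH)
    then show ?thesis unfolding low digits_N using False by (simp add: digits_ten_mult_add)
  qed
qed simp

lemma digits_less_ten: "d \<in> set (digits N) \<Longrightarrow> d < 10"
proof (induction N rule: digits.induct)
  case (1 n)
  then show ?case by (cases "n < 10") (auto simp: digits.simps[of n])
qed

lemma length_digits_gt: "10 ^ k \<le> N \<Longrightarrow> k < length (digits N)"
proof (induction k arbitrary: N)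
  case 0
  then show ?case by (simp add: digits.simps[of N])
next
  case (Suc k)
  then have "10 \<le> N" "10 ^ k \<le> N div 10"
    by (auto simp: less_eq_div_iff_mult_less_eq mult.commute intro: order_trans[rotated])
  then show ?case using Suc.IH by (simp add: digits.simps[of N])
qed

lemma digit_mset_ge_ten:
  "10 \<le> N \<Longrightarrow> digit_mset N = add_mset (real (N mod 10)) (digit_mset (N div 10))"
  by (simp add: digit_mset_def digits.simps[of N])

lemma size_digit_mset: "size (digit_mset N) = length (digits N)"
  by (simp add: digit_mset_def)

lemma digit_mset_mod_power_ten:
  "0 < k \<Longrightarrow> 10 ^ k \<le> N \<Longrightarrow> digit_mset (N mod 10 ^ k) \<subseteq># digit_mset N"
  unfolding digit_mset_def by (intro image_mset_subseteq_mono mset_digits_mod_power_ten)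

lemma five_pow_mod_ten: "0 < n \<Longrightarrow> (5::nat) ^ n mod 10 = 5"
proof (induction n)
  case (Suc n)
  then show ?case
    by (cases "n = 0") (simp_all add: mod_mult_right_eq[of 5 "5 ^ n", symmetric])
qed simp

lemma selfcondensable_five_powI:
  assumes "inV R (real n)" and "digit_mset (5 ^ n) = add_mset 5 R"
  shows "selfcondensable (5 ^ n)"
  using inV_power[OF inV.single[of 5] assms(1)] assms(2) by (simp add: selfcondensable_def)

lemma selfcondensable_five_pow_by_digits:
  assumes "inV A x" and "x = real n" and "u \<in> {0, 1}" and "0 < k" and "10 ^ k \<le> (5::nat) ^ n"
    and "add_mset 5 (add_mset u A) \<subseteq># digit_mset (5 ^ n mod 10 ^ k)"
  shows "selfcondensable (5 ^ n)"
proof -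
  have "add_mset 5 (add_mset u A) \<subseteq># digit_mset (5 ^ n)"
    using assms(6) digit_mset_mod_power_ten[OF assms(4,5)] by (rule subset_mset.order_trans)
  then obtain B where B: "digit_mset (5 ^ n) = add_mset 5 (add_mset u A) + B"
    by (metis subset_mset.le_iff_add)
  have "inV (A + add_mset u B) (real n)"
    using inV_times_one[OF assms(1) inV_one_extend[OF inV_zero_or_one[OF assms(3)], of B]] assms(2)
    by simp
  then show ?thesis by (rule selfcondensable_five_powI) (simp add: B)
qed

lemma selfcondensable_five_pow_large:
  assumes "0 < n" and large: "10 ^ (2 * pair_cost n + 10) \<le> (5::nat) ^ n"
  shows "selfcondensable (5 ^ n)"
proof -
  define R where "R = digit_mset (5 ^ n div 10)"
  have "(10::nat) \<le> 10 ^ (2 * pair_cost n + 10)" by (rule self_le_power) simp_all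
  then have digits: "digit_mset (5 ^ n) = add_mset 5 R"
    using large digit_mset_ge_ten five_pow_mod_ten[OF assms(1)] by (simp add: R_def)
  have "2 * pair_cost n + 10 < size (digit_mset (5 ^ n))"
    using length_digits_gt[OF large] by (simp add: size_digit_mset)
  then have size_R: "2 * pair_cost n + 10 \<le> size R" by (simp add: digits)
  have "set_mset R \<subseteq> real ` {..<10}"
    using digits_less_ten by (auto simp: R_def digit_mset_def)
  then obtain ds T where "R = pairs ds + T" "size R \<le> 2 * length ds + card (real ` {..<10::nat})"
    using pairs_decomposition by blast
  moreover have "card (real ` {..<10::nat}) = 10" by (simp add: card_image)
  ultimately have "inV R (real n)"
    using inV_pairs[of n ds T] size_R assms(1) by simp
  then show ?thesis using digits by (rule selfcondensable_five_powI)
qed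

lemma power_ten_pair_cost_le_five_pow:
  assumes "56 \<le> n"
  shows "10 ^ (2 * pair_cost n + 10) \<le> (5::nat) ^ n"
  using assms
proof (induction n rule: less_induct)
  case (less n)
  show ?case
  proof (cases "n < 112")
    case True
    then have "n \<in> {56..<112}" using less.prems by simp
    then show ?thesis
      by (simp add: atLeastLessThan_nat_numeral) (elim disjE; simp add: pair_cost.simps)
  next
    case False
    define k where "k = n div 2"
    have k: "56 \<le> k" "k < n" using False by (auto simp: k_def)
    have "pair_cost n \<le> pair_cost k + 3" using False by (simp add: pair_cost.simps[of n] k_def)
    then have "(10::nat) ^ (2 * pair_cost n + 10)
        \<le> 10 ^ (2 * pair_cost k + 10) * 10 ^ (2 * pair_cost k + 10)"
      by (simp flip: power_add)
    also have "\<dots> \<le> 5 ^ k * 5 ^ k" using less.IH[OF k(2) k(1)] by (simp add: mult_mono)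
    also have "\<dots> \<le> 5 ^ n" by (simp flip: power_add) (simp add: k_def)
    finally show ?thesis .
  qed
qed

text \<open>Only the last 16 digits of 5^n are computed: they already contain the digits used.\<close>
lemma selfcondensable_five_pow_small:
  assumes "n \<in> {24..<56}"
  shows "selfcondensable (5 ^ n)"
proof -
  note by_digits = selfcondensable_five_pow_by_digits[where k = 16]
    and build = inV_add inV_diff inV_mult inV_power inV_fact_digit inV.single
    and evaluate = digit_mset_def digits.simps fact_numeral
  have "selfcondensable (5 ^ 24)"
    by (rule by_digits[where A = "{#6#} + ({#2#} + {#9#})" and x = "6 + 2 * 9" and u = 0])
      (intro build, simp_all add: evaluate)
  moreover have "selfcondensable (5 ^ 25)"
    by (rule by_digits[where A = "{#5#} + {#real 2#}" and x = "5 ^ 2" and u = 1])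
      (intro build, simp_all add: evaluate)
  moreover have "selfcondensable (5 ^ 26)"
    by (rule by_digits[where A = "{#2#} + {#real 4#}" and x = "2 + fact 4" and u = 1])
      (intro build, simp_all add: evaluate)
  moreover have "selfcondensable (5 ^ 27)"
    by (rule by_digits[where A = "{#3#} + {#9#}" and x = "3 * 9" and u = 1])
      (intro build, simp_all add: evaluate)
  moreover have "selfcondensable (5 ^ 28)"
    by (rule by_digits[where A = "{#real 4#} + ({#6#} + {#2#})" and x = "fact 4 + (6 - 2)" and u = 0])
      (intro build, simp_all add: evaluate)
  moreover have "selfcondensable (5 ^ 29)"
    by (rule by_digits[where A = "{#real 3#} + {#real 2#} + {#7#}" and x = "fact 3 ^ 2 - 7" and u = 1])
      (intro build, simp_all add: evaluate)
  moreover have "selfcondensable (5 ^ 30)"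
    by (rule by_digits[where A = "{#5#} + {#6#}" and x = "5 * 6" and u = 1])
      (intro build, simp_all add: evaluate)
  moreover have "selfcondensable (5 ^ 31)"
    by (rule by_digits[where A = "{#5#} + {#8#} + {#9#}" and x = "5 * 8 - 9" and u = 1])
      (intro build, simp_all add: evaluate)
  moreover have "selfcondensable (5 ^ 32)"
    by (rule by_digits[where A = "{#8#} + ({#6#} + {#2#})" and x = "8 * (6 - 2)" and u = 0])
      (intro build, simp_all add: evaluate)
  moreover have "selfcondensable (5 ^ 33)"
    by (rule by_digits[where A = "{#real 4#} + ({#3#} + {#real 2#})" and x = "fact 4 + 3 ^ 2" and u = 1])
      (intro build, simp_all add: evaluate)
  moreover have "selfcondensable (5 ^ 34)"
    by (rule by_digits[where A = "{#2#} + ({#2#} + {#real 5#})" and x = "2 + 2 ^ 5" and u = 0])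
      (intro build, simp_all add: evaluate)
  moreover have "selfcondensable (5 ^ 35)"
    by (rule by_digits[where A = "{#real 3#} + {#real 2#} + {#1#}" and x = "fact 3 ^ 2 - 1" and u = 1])
      (intro build, simp_all add: evaluate)
  moreover have "selfcondensable (5 ^ 36)"
    by (rule by_digits[where A = "{#6#} + {#real 2#}" and x = "6 ^ 2" and u = 0])
      (intro build, simp_all add: evaluate)
  moreover have "selfcondensable (5 ^ 37)"
    by (rule by_digits[where A = "{#real 0#} + ({#real 3#} + {#real 2#})" and x = "fact 0 + fact 3 ^ 2" and u = 1])
      (intro build, simp_all add: evaluate)
  moreover have "selfcondensable (5 ^ 38)"
    by (rule by_digits[where A = "{#6#} + ({#2#} + {#real 5#})" and x = "6 + 2 ^ 5" and u = 1])
      (intro build, simp_all add: evaluate)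
  moreover have "selfcondensable (5 ^ 39)"
    by (rule by_digits[where A = "{#7#} + ({#2#} + {#real 5#})" and x = "7 + 2 ^ 5" and u = 1])
      (intro build, simp_all add: evaluate)
  moreover have "selfcondensable (5 ^ 40)"
    by (rule by_digits[where A = "{#5#} + ({#2#} + {#real 3#})" and x = "5 * 2 ^ 3" and u = 0])
      (intro build, simp_all add: evaluate)
  moreover have "selfcondensable (5 ^ 41)"
    by (rule by_digits[where A = "{#5#} + ({#real 3#} + {#real 2#})" and x = "5 + fact 3 ^ 2" and u = 1])
      (intro build, simp_all add: evaluate)
  moreover have "selfcondensable (5 ^ 42)"
    by (rule by_digits[where A = "{#6#} + {#7#}" and x = "6 * 7" and u = 0])
      (intro build, simp_all add: evaluate)
  moreover have "selfcondensable (5 ^ 43)"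
    by (rule by_digits[where A = "{#7#} + ({#real 3#} + {#real 2#})" and x = "7 + fact 3 ^ 2" and u = 1])
      (intro build, simp_all add: evaluate)
  moreover have "selfcondensable (5 ^ 44)"
    by (rule by_digits[where A = "{#2#} + {#real 4#} + {#4#}" and x = "2 * fact 4 - 4" and u = 1])
      (intro build, simp_all add: evaluate)
  moreover have "selfcondensable (5 ^ 45)"
    by (rule by_digits[where A = "{#9#} + ({#real 3#} + {#real 2#})" and x = "9 + fact 3 ^ 2" and u = 1])
      (intro build, simp_all add: evaluate)
  moreover have "selfcondensable (5 ^ 46)"
    by (rule by_digits[where A = "{#6#} + ({#5#} + {#8#})" and x = "6 + 5 * 8" and u = 1])
      (intro build, simp_all add: evaluate)
  moreover have "selfcondensable (5 ^ 47)"
    by (rule by_digits[where A = "{#7#} + ({#5#} + {#8#})" and x = "7 + 5 * 8" and u = 1])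
      (intro build, simp_all add: evaluate)
  moreover have "selfcondensable (5 ^ 48)"
    by (rule by_digits[where A = "{#6#} + {#8#}" and x = "6 * 8" and u = 0])
      (intro build, simp_all add: evaluate)
  moreover have "selfcondensable (5 ^ 49)"
    by (rule by_digits[where A = "{#real 4#} + ({#5#} + {#real 2#})" and x = "fact 4 + 5 ^ 2" and u = 1])
      (intro build, simp_all add: evaluate)
  moreover have "selfcondensable (5 ^ 50)"
    by (rule by_digits[where A = "{#2#} + ({#5#} + {#real 2#})" and x = "2 * 5 ^ 2" and u = 0])
      (intro build, simp_all add: evaluate)
  moreover have "selfcondensable (5 ^ 51)"
    by (rule by_digits[where A = "{#3#} + ({#6#} + {#8#})" and x = "3 + 6 * 8" and u = 1])
      (intro build, simp_all add: evaluate)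
  moreover have "selfcondensable (5 ^ 52)"
    by (rule by_digits[where A = "{#4#} + ({#6#} + {#8#})" and x = "4 + 6 * 8" and u = 1])
      (intro build, simp_all add: evaluate)
  moreover have "selfcondensable (5 ^ 53)"
    by (rule by_digits[where A = "{#real 3#} + {#9#} + {#real 0#}" and x = "fact 3 * 9 - fact 0" and u = 1])
      (intro build, simp_all add: evaluate)
  moreover have "selfcondensable (5 ^ 54)"
    by (rule by_digits[where A = "{#real 4#} + ({#5#} + {#6#})" and x = "fact 4 + 5 * 6" and u = 1])
      (intro build, simp_all add: evaluate)
  moreover have "selfcondensable (5 ^ 55)"
    by (rule by_digits[where A = "{#7#} + {#8#} + {#real 0#}" and x = "7 * 8 - fact 0" and u = 1])
      (intro build, simp_all add: evaluate)
  ultimately show ?thesis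
    using assms by (simp add: atLeastLessThan_nat_numeral) (elim disjE; simp)
qed

theorem lemma7p3:
  fixes n :: nat
  assumes "n \<ge> 24"
  shows "selfcondensable (5 ^ n)"
proof (cases "n < 56")
  case True
  with assms show ?thesis by (intro selfcondensable_five_pow_small) simp
next
  case False
  then show ?thesis
    by (intro selfcondensable_five_pow_large power_ten_pair_cost_le_five_pow) simp_all
qed

end
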